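(* Under any CLC choice model, for every seller $i\in\mathcal N$ and price $p_i$, the revenue $R_i(p_i,\mathbf p_{-i})$ is non-decreasing in $\mathbf p_{-i}$: if $\mathbf p'_{-i}\ge\mathbf p_{-i}$ componentwise, then $R_i(p_i,\mathbf p'_{-i})\ge R_i(p_i,\mathbf p_{-i})$.
   Context: CLC setup. There are $N$ sellers $\mathcal N=\{1,\dots,N\}$, each selling one item, and a unit mass of customers, each buying at most one item. Items have a price attribute (indexed $0$) and $K$ non-price attributes indexed by $\mathcal A=\{1,\dots,K\}$; $\bar{\mathcal A}=\{0\}\cup\mathcal A$. Non-price attribute $k$ takes values in an arbitrary set $\mathcal V^k$; prices lie in $\mathcal V=[0,\bar v]$ for a fixed $\bar v>0$. Seller $i$'s item has fixed non-price attribute values $v_i^k\in\mathcal V^k$ and price $p_i\in\mathcal V$ chosen by seller $i$; $\mathbf p=(p_1,\dots,p_N)$, and $v_i^0:=p_i$. Each customer $c$ has: a strict total order $\succ_c$ on $\bar{\mathcal A}$ (attribute importance); for each attribute $k$ a complete transitive weak preference $\succsim_c^k$ on its value set, with strict part $\succ_c^k$ and indifference $\sim_c^k$ (and $v\sim_c^k v$), where for price $p\succ_c^0p'$ iff $p<p'$ and $p\sim_c^0p'$ iff $p=p'$; a willingness-to-pay $w_c\in[0,\bar v]$; a set $\mathcal C_c\subseteq\mathcal V^1\times\cdots\times\mathcal V^K$ of admissible non-price attribute vectors; and a strict tie-breaking order over sellers. Customer $c$ lexicographically prefers item $i$ to item $j$ if there is an attribute $k$ with $v_i^{k'}\sim_c^{k'}v_j^{k'}$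 for all $k'\succ_c k$ and $v_i^k\succ_c^k v_j^k$; if no such $k$ exists, the tie-breaking order decides. Under the Consider-then-Choose with Lexicographic Choice (CLC) model, customer $c$ forms the consideration set $\mathcal N_c=\{i\in\mathcal N: p_i\le w_c,\ (v_i^1,\dots,v_i^K)\in\mathcal C_c\}$, buys nothing if it is empty, and otherwise buys the top-ranked item of $\mathcal N_c$ under this lexicographic order (with tie-breaking). An instance of CLC choice is a joint distribution $\mathcal G$ of these customer primitives; the conditional distribution of $w_c$ given the other primitives is assumed to have a Lipschitz continuous density. $D_i(\mathbf p)$ is the probability a customer buys from seller $i$ and $R_i(\mathbf p)=p_iD_i(\mathbf p)$ is seller $i$'s revenue, also written $R_i(p_i,\mathbf p_{-i})$. *)

theory Defs
  imports "HOL-Analysis.Analysis" "HOL-Probability.Probability"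
begin

text \<open>Sellers are 1..N, attributes are 0..K (0 = price, 1..K non-price).
  vattr i k : value of non-price attribute k of seller i (k in 1..K).
  p i : price of seller i.
  A customer is a pair (o, w): o carries the non-WTP primitives, w is the willingness-to-pay.
  imp o k k' : attribute k is strictly more important than k' for customer type o.
  pref o k a b : a is weakly preferred to b in non-price attribute k.
  C o : admissible non-price attribute vectors (functions on 1..K).
  tie o i j : seller i is ranked above seller j by the tie-breaking order.\<close>

definition attr_vec :: "nat \<Rightarrow> (nat \<Rightarrow> nat \<Rightarrow> 'v) \<Rightarrow> nat \<Rightarrow> (nat \<Rightarrow> 'v)" where
  "attr_vec K vattr i = restrict (vattr i) {1..K}"

definition attr_indiff ::
  "(nat \<Rightarrow> 'v \<Rightarrow> 'v \<Rightarrow> bool) \<Rightarrow> (nat \<Rightarrow> nat \<Rightarrow> 'v) \<Rightarrow> (nat \<Rightarrow> real) \<Rightarrow> nat \<Rightarrow> nat \<Rightarrow> nat \<Rightarrow> bool" where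
  "attr_indiff pr vattr p k i j =
     (if k = 0 then p i = p j
      else pr k (vattr i k) (vattr j k) \<and> pr k (vattr j k) (vattr i k))"

definition attr_strict ::
  "(nat \<Rightarrow> 'v \<Rightarrow> 'v \<Rightarrow> bool) \<Rightarrow> (nat \<Rightarrow> nat \<Rightarrow> 'v) \<Rightarrow> (nat \<Rightarrow> real) \<Rightarrow> nat \<Rightarrow> nat \<Rightarrow> nat \<Rightarrow> bool" where
  "attr_strict pr vattr p k i j =
     (if k = 0 then p i < p j
      else pr k (vattr i k) (vattr j k) \<and> \<not> pr k (vattr j k) (vattr i k))"

definition lex_prefers ::
  "nat \<Rightarrow> (nat \<Rightarrow> nat \<Rightarrow> bool) \<Rightarrow> (nat \<Rightarrow> 'v \<Rightarrow> 'v \<Rightarrow> bool) \<Rightarrow> (nat \<Rightarrow> nat \<Rightarrow> 'v)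
     \<Rightarrow> (nat \<Rightarrow> real) \<Rightarrow> nat \<Rightarrow> nat \<Rightarrow> bool" where
  "lex_prefers K imp pr vattr p i j =
     (\<exists>k\<in>{0..K}. (\<forall>k'\<in>{0..K}. imp k' k \<longrightarrow> attr_indiff pr vattr p k' i j)
                 \<and> attr_strict pr vattr p k i j)"

definition ranks_above ::
  "nat \<Rightarrow> (nat \<Rightarrow> nat \<Rightarrow> bool) \<Rightarrow> (nat \<Rightarrow> 'v \<Rightarrow> 'v \<Rightarrow> bool) \<Rightarrow> (nat \<Rightarrow> nat \<Rightarrow> bool)
     \<Rightarrow> (nat \<Rightarrow> nat \<Rightarrow> 'v) \<Rightarrow> (nat \<Rightarrow> real) \<Rightarrow> nat \<Rightarrow> nat \<Rightarrow> bool" where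
  "ranks_above K imp pr tie vattr p i j =
     (lex_prefers K imp pr vattr p i j \<or>
      (\<not> lex_prefers K imp pr vattr p i j \<and> \<not> lex_prefers K imp pr vattr p j i \<and> tie i j))"

definition consideration_set ::
  "nat \<Rightarrow> nat \<Rightarrow> (nat \<Rightarrow> 'v) set \<Rightarrow> real \<Rightarrow> (nat \<Rightarrow> nat \<Rightarrow> 'v) \<Rightarrow> (nat \<Rightarrow> real) \<Rightarrow> nat set" where
  "consideration_set N K C w vattr p = {i\<in>{1..N}. p i \<le> w \<and> attr_vec K vattr i \<in> C}"

definition buys ::
  "nat \<Rightarrow> nat \<Rightarrow> ('o \<Rightarrow> nat \<Rightarrow> nat \<Rightarrow> bool) \<Rightarrow> ('o \<Rightarrow> nat \<Rightarrow> 'v \<Rightarrow> 'v \<Rightarrow> bool)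
     \<Rightarrow> ('o \<Rightarrow> (nat \<Rightarrow> 'v) set) \<Rightarrow> ('o \<Rightarrow> nat \<Rightarrow> nat \<Rightarrow> bool) \<Rightarrow> (nat \<Rightarrow> nat \<Rightarrow> 'v)
     \<Rightarrow> (nat \<Rightarrow> real) \<Rightarrow> nat \<Rightarrow> 'o \<times> real \<Rightarrow> bool" where
  "buys N K imp pr C tie vattr p i x =
     (let t = fst x; w = snd x; S = consideration_set N K (C t) w vattr p in
       i \<in> S \<and> (\<forall>j\<in>S. j \<noteq> i \<longrightarrow> ranks_above K (imp t) (pr t) (tie t) vattr p i j))"

definition demand ::
  "('o \<times> real) measure \<Rightarrow> nat \<Rightarrow> nat \<Rightarrow> ('o \<Rightarrow> nat \<Rightarrow> nat \<Rightarrow> bool) \<Rightarrow> ('o \<Rightarrow> nat \<Rightarrow> 'v \<Rightarrow> 'v \<Rightarrow> bool)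
     \<Rightarrow> ('o \<Rightarrow> (nat \<Rightarrow> 'v) set) \<Rightarrow> ('o \<Rightarrow> nat \<Rightarrow> nat \<Rightarrow> bool) \<Rightarrow> (nat \<Rightarrow> nat \<Rightarrow> 'v)
     \<Rightarrow> (nat \<Rightarrow> real) \<Rightarrow> nat \<Rightarrow> real" where
  "demand M N K imp pr C tie vattr p i =
     measure M {x\<in>space M. buys N K imp pr C tie vattr p i x}"

definition revenue ::
  "('o \<times> real) measure \<Rightarrow> nat \<Rightarrow> nat \<Rightarrow> ('o \<Rightarrow> nat \<Rightarrow> nat \<Rightarrow> bool) \<Rightarrow> ('o \<Rightarrow> nat \<Rightarrow> 'v \<Rightarrow> 'v \<Rightarrow> bool)
     \<Rightarrow> ('o \<Rightarrow> (nat \<Rightarrow> 'v) set) \<Rightarrow> ('o \<Rightarrow> nat \<Rightarrow> nat \<Rightarrow> bool) \<Rightarrow> (nat \<Rightarrow> nat \<Rightarrow> 'v)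
     \<Rightarrow> (nat \<Rightarrow> real) \<Rightarrow> nat \<Rightarrow> real" where
  "revenue M N K imp pr C tie vattr p i = p i * demand M N K imp pr C tie vattr p i"

definition strict_total_on :: "'a set \<Rightarrow> ('a \<Rightarrow> 'a \<Rightarrow> bool) \<Rightarrow> bool" where
  "strict_total_on A r =
     ((\<forall>a\<in>A. \<not> r a a) \<and> (\<forall>a\<in>A. \<forall>b\<in>A. \<forall>c\<in>A. r a b \<longrightarrow> r b c \<longrightarrow> r a c)
      \<and> (\<forall>a\<in>A. \<forall>b\<in>A. a \<noteq> b \<longrightarrow> r a b \<or> r b a))"

definition weak_pref_on :: "'a set \<Rightarrow> ('a \<Rightarrow> 'a \<Rightarrow> bool) \<Rightarrow> bool" where
  "weak_pref_on A r =
     ((\<forall>a\<in>A. \<forall>b\<in>A. r a b \<or> r b a) \<and> (\<forall>a\<in>A. \<forall>b\<in>A. \<forall>c\<in>A. r a b \<longrightarrow> r b c \<longrightarrow> r a c))"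

end

theory Submission
  imports Defs
begin

text \<open>Raising competitors' prices while keeping \<open>p\<^sub>i\<close> fixed can only improve item \<open>i\<close>'s
  standing: non-price comparisons are untouched, and in the price attribute \<open>i\<close> can only gain,
  so every lexicographic win of \<open>i\<close> survives and every loss of \<open>i\<close> already was a loss before.
  Competitors can only leave the consideration set while \<open>i\<close> stays in it, so the event
  "buy from \<open>i\<close>" grows, hence demand and revenue grow.\<close>

lemma attr_indiff_price_indep:
  "k \<noteq> 0 \<Longrightarrow> attr_indiff pr vattr p k a b = attr_indiff pr vattr q k a b"
  by (simp add: attr_indiff_def)

lemma attr_strict_price_indep:
  "k \<noteq> 0 \<Longrightarrow> attr_strict pr vattr p k a b = attr_strict pr vattr q k a b"
  by (simp add: attr_strict_def)

lemma lex_prefers_price_shift: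
  assumes irr: "irreflp_on {0..K} imp" and trans: "transp_on {0..K} imp"
    and pref: "lex_prefers K imp pr vattr q a b"
    and a_cheaper: "q' a \<le> q a" and b_dearer: "q b \<le> q' b"
  shows "lex_prefers K imp pr vattr q' a b"
proof -
  from pref obtain k where k: "k \<in> {0..K}"
    and above: "\<forall>k'\<in>{0..K}. imp k' k \<longrightarrow> attr_indiff pr vattr q k' a b"
    and strict: "attr_strict pr vattr q k a b"
    unfolding lex_prefers_def by blast
  have above_nonprice: "attr_indiff pr vattr q' k' a b"
    if "k' \<in> {0..K}" "imp k' k" "k' \<noteq> 0" for k'
    using above that attr_indiff_price_indep by blast
  show ?thesis
  proof (cases "q' a < q' b \<and> (k = 0 \<or> imp 0 k)")
    case True
    \<comment> \<open>price now decides: everything more important than price is more important than \<open>k\<close>\<close>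
    have "attr_indiff pr vattr q' k' a b" if "k' \<in> {0..K}" "imp k' 0" for k'
    proof -
      have "k' \<noteq> 0" using irr that(2) by (metis atLeastAtMost_iff irreflp_onD le0)
      moreover have "imp k' k" using True that k transp_onD[OF trans, of k' 0 k] by auto
      ultimately show ?thesis using above_nonprice that by blast
    qed
    moreover have "attr_strict pr vattr q' 0 a b" using True by (simp add: attr_strict_def)
    ultimately show ?thesis unfolding lex_prefers_def by force
  next
    case False
    have "k \<noteq> 0"
    proof
      assume "k = 0"
      with False strict a_cheaper b_dearer show False by (simp add: attr_strict_def)
    qed
    have price_tie: "q' a = q' b" if "imp 0 k"
    proof -
      have "q a = q b" using above[rule_format, of 0] that by (simp add: attr_indiff_def)
      with False that a_cheaper b_dearer show ?thesis by auto
    qed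
    have "attr_indiff pr vattr q' k' a b" if "k' \<in> {0..K}" "imp k' k" for k'
    proof (cases "k' = 0")
      case True
      with that price_tie show ?thesis by (simp add: attr_indiff_def)
    qed (use above_nonprice that in blast)
    moreover have "attr_strict pr vattr q' k a b"
      using strict \<open>k \<noteq> 0\<close> attr_strict_price_indep by blast
    ultimately show ?thesis using k unfolding lex_prefers_def by blast
  qed
qed

lemma ranks_above_price_shift:
  assumes irr: "irreflp_on {0..K} imp" and trans: "transp_on {0..K} imp"
    and "ranks_above K imp pr tie vattr q a b"
    and "q' a \<le> q a" and "q b \<le> q' b"
  shows "ranks_above K imp pr tie vattr q' a b"
  using assms lex_prefers_price_shift[OF irr trans, of pr vattr q a b q']
    lex_prefers_price_shift[OF irr trans, of pr vattr q' b a q]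
  unfolding ranks_above_def by blast

lemma buys_mono_competitor_prices:
  assumes irr: "irreflp_on {0..K} (imp (fst x))" and trans: "transp_on {0..K} (imp (fst x))"
    and buys: "buys N K imp pr C tie vattr q i x"
    and i_cheaper: "q' i \<le> q i"
    and others_dearer: "\<forall>j\<in>{1..N}. j \<noteq> i \<longrightarrow> q j \<le> q' j"
  shows "buys N K imp pr C tie vattr q' i x"
proof -
  let ?S = "\<lambda>q. consideration_set N K (C (fst x)) (snd x) vattr q"
  have i_in: "i \<in> ?S q" and wins: "\<forall>j\<in>?S q. j \<noteq> i \<longrightarrow>
      ranks_above K (imp (fst x)) (pr (fst x)) (tie (fst x)) vattr q i j"
    using buys by (simp_all add: buys_def Let_def)
  have "i \<in> ?S q'"
    using i_in i_cheaper by (auto simp: consideration_set_def)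
  moreover have "ranks_above K (imp (fst x)) (pr (fst x)) (tie (fst x)) vattr q' i j"
    if "j \<in> ?S q'" "j \<noteq> i" for j
  proof -
    have "q j \<le> q' j" using that others_dearer by (simp add: consideration_set_def)
    with that have "j \<in> ?S q" by (auto simp: consideration_set_def)
    with wins \<open>j \<noteq> i\<close> have "ranks_above K (imp (fst x)) (pr (fst x)) (tie (fst x)) vattr q i j"
      by blast
    from ranks_above_price_shift[OF irr trans this i_cheaper \<open>q j \<le> q' j\<close>] show ?thesis .
  qed
  ultimately show ?thesis by (simp add: buys_def Let_def)
qed

theorem propositionB1:
  fixes M :: "('o \<times> real) measure" and Mo :: "'o measure"
    and N K :: nat and vbar :: real
    and V :: "nat \<Rightarrow> 'v set" and vattr :: "nat \<Rightarrow> nat \<Rightarrow> 'v"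
    and imp :: "'o \<Rightarrow> nat \<Rightarrow> nat \<Rightarrow> bool" and pr :: "'o \<Rightarrow> nat \<Rightarrow> 'v \<Rightarrow> 'v \<Rightarrow> bool"
    and C :: "'o \<Rightarrow> (nat \<Rightarrow> 'v) set" and tie :: "'o \<Rightarrow> nat \<Rightarrow> nat \<Rightarrow> bool"
    and f :: "'o \<Rightarrow> real \<Rightarrow> real"
    and p p' :: "nat \<Rightarrow> real" and i :: nat
  assumes vbar_pos: "vbar > 0"
    and vattr_in: "\<forall>j\<in>{1..N}. \<forall>k\<in>{1..K}. vattr j k \<in> V k"
    and prefs_wf: "\<forall>x\<in>space M.
          strict_total_on {0..K} (imp (fst x))
        \<and> (\<forall>k\<in>{1..K}. weak_pref_on (V k) (pr (fst x) k))
        \<and> C (fst x) \<subseteq> PiE {1..K} V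
        \<and> strict_total_on {1..N} (tie (fst x))
        \<and> snd x \<in> {0..vbar}"
    and prob: "prob_space M"
    and prob_o: "prob_space Mo"
    and disint: "\<forall>A\<in>sets M. emeasure M A =
          (\<integral>\<^sup>+ t. (\<integral>\<^sup>+ w. ennreal (f t w) * indicator A (t, w) \<partial>lborel) \<partial>Mo)"
    and dens_nonneg: "\<forall>t w. f t w \<ge> 0"
    and dens_supp: "\<forall>t. \<forall>w. w \<notin> {0..vbar} \<longrightarrow> f t w = 0"
    and dens_lip: "\<forall>t\<in>space Mo. \<exists>L. L-lipschitz_on {0..vbar} (f t)"
    and meas: "\<forall>q j. (\<forall>l\<in>{1..N}. q l \<in> {0..vbar}) \<longrightarrow>
          {x\<in>space M. buys N K imp pr C tie vattr q j x} \<in> sets M"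
    and i_in: "i \<in> {1..N}"
    and p_range: "\<forall>j\<in>{1..N}. p j \<in> {0..vbar}"
    and p'_range: "\<forall>j\<in>{1..N}. p' j \<in> {0..vbar}"
    and same_i: "p' i = p i"
    and ge: "\<forall>j\<in>{1..N}. j \<noteq> i \<longrightarrow> p j \<le> p' j"
  shows "revenue M N K imp pr C tie vattr p' i \<ge> revenue M N K imp pr C tie vattr p i"
proof -
  interpret prob_space M by (rule prob)
  have buys_more: "{x\<in>space M. buys N K imp pr C tie vattr p i x}
      \<subseteq> {x\<in>space M. buys N K imp pr C tie vattr p' i x}"
  proof safe
    fix x assume x: "x \<in> space M" and "buys N K imp pr C tie vattr p i x"
    from prefs_wf x have "strict_total_on {0..K} (imp (fst x))" by blast
    then have "irreflp_on {0..K} (imp (fst x))" "transp_on {0..K} (imp (fst x))"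
      unfolding strict_total_on_def irreflp_on_def transp_on_def by blast+
    from buys_mono_competitor_prices[OF this \<open>buys N K imp pr C tie vattr p i x\<close>] same_i ge
    show "buys N K imp pr C tie vattr p' i x" by simp
  qed
  have "demand M N K imp pr C tie vattr p i \<le> demand M N K imp pr C tie vattr p' i"
    unfolding demand_def using buys_more meas p'_range by (intro finite_measure_mono) auto
  moreover have "p i \<ge> 0" using p_range i_in by auto
  ultimately show ?thesis unfolding revenue_def using same_i by (simp add: mult_left_mono)
qed

end
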